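(* Let $\mathcal{C}_0\subseteq\mathrm{GF}(q^m)^r$ be a linear code with rank weight enumerator $W^{\mathrm{R}}_{\mathcal{C}_0}(x,y)$, and for $s\ge0$ let $\mathcal{C}_s$ be its $s$-th order $\mathbf{B}$-elementary extension, with rank weight enumerator $W^{\mathrm{R}}_{\mathcal{C}_s}(x,y)$. Then $W^{\mathrm{R}}_{\mathcal{C}_s}(x,y)$ does not depend on $\mathbf{B}$ and $$W^{\mathrm{R}}_{\mathcal{C}_s}(x,y)=W^{\mathrm{R}}_{\mathcal{C}_0}(x,y)*\big[x+(q^m-1)y\big]^{[s]}.$$
   Context: $q$ is a prime power. For $\mathbf{x}\in\mathrm{GF}(q^m)^N$, $\mathrm{rk}(\mathbf{x})$ is the dimension over $\mathrm{GF}(q)$ of the $\mathrm{GF}(q)$-span of its coordinates; the rank weight enumerator of $\mathcal{C}\subseteq\mathrm{GF}(q^m)^N$ is $\sum_{\mathbf{c}\in\mathcal{C}}y^{\mathrm{rk}(\mathbf{c})}x^{N-\mathrm{rk}(\mathbf{c})}$. For $s\ge1$ and an $s\times r$ matrix $\mathbf{B}$ over $\mathrm{GF}(q)$, the $s$-th order $\mathbf{B}$-elementary extension of a linear code $\mathcal{C}_0\subseteq\mathrm{GF}(q^m)^r$ is $\mathcal{C}_s=\{(c_0,\dots,c_{r+s-1})\in\mathrm{GF}(q^m)^{r+s}:(c_0,\dots,c_{r-1})-(c_r,\dots,c_{r+s-1})\mathbf{B}\in\mathcal{C}_0\}$; the $0$-th order extension is $\mathcal{C}_0$ itself. $q$-product: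 for homogeneous polynomials $a(x,y;m)=\sum_{i=0}^{d}a_i(m)y^ix^{d-i}$ and $b(x,y;m)=\sum_{j=0}^{e}b_j(m)y^jx^{e-j}$ of degrees $d,e$, with coefficients real functions of $m$ (zero outside the given ranges), $a*b=\sum_{u=0}^{d+e}c_u(m)y^ux^{d+e-u}$ with $c_u(m)=\sum_{i=0}^uq^{ie}a_i(m)b_{u-i}(m-i)$. $q$-powers: $a^{[0]}=1$, $a^{[l]}=a^{[l-1]}*a$. Here $x+(q^m-1)y$ has coefficients $1$ and $q^m-1$; the coefficients of $W^{\mathrm{R}}_{\mathcal{C}_0}$ are regarded as constants in $m$. *)

theory Defs
  imports Main "HOL.Real"
begin

(* GF(q^m) is modelled as a finite field type 'f; GF(q) as a subfield K of it. *)
definition subfield :: "'f::field set \<Rightarrow> bool" where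
  "subfield K \<longleftrightarrow> 0 \<in> K \<and> 1 \<in> K \<and> (\<forall>a\<in>K. \<forall>b\<in>K. a + b \<in> K \<and> a * b \<in> K)
     \<and> (\<forall>a\<in>K. - a \<in> K \<and> inverse a \<in> K)"

definition K_indep :: "'f::field set \<Rightarrow> 'f set \<Rightarrow> bool" where
  "K_indep K S \<longleftrightarrow> finite S \<and>
     (\<forall>g. (\<forall>v\<in>S. g v \<in> K) \<and> (\<Sum>v\<in>S. g v * v) = 0 \<longrightarrow> (\<forall>v\<in>S. g v = 0))"

definition rk :: "'f::field set \<Rightarrow> 'f list \<Rightarrow> nat" where
  "rk K c = Max {card S | S. S \<subseteq> set c \<and> K_indep K S}"

definition linear_code :: "nat \<Rightarrow> 'f::field list set \<Rightarrow> bool" where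
  "linear_code N C \<longleftrightarrow> C \<subseteq> {c. length c = N} \<and> replicate N 0 \<in> C
     \<and> (\<forall>a\<in>C. \<forall>b\<in>C. map2 (+) a b \<in> C) \<and> (\<forall>t. \<forall>a\<in>C. map (\<lambda>x. t * x) a \<in> C)"

definition K_matrix :: "'f::field set \<Rightarrow> nat \<Rightarrow> nat \<Rightarrow> (nat \<Rightarrow> nat \<Rightarrow> 'f) \<Rightarrow> bool" where
  "K_matrix K s r B \<longleftrightarrow> (\<forall>i<s. \<forall>j<r. B i j \<in> K)"

definition elem_ext :: "'f::field list set \<Rightarrow> nat \<Rightarrow> nat \<Rightarrow> (nat \<Rightarrow> nat \<Rightarrow> 'f) \<Rightarrow> 'f list set" where
  "elem_ext C0 r s B = {c. length c = r + s \<and>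
      map (\<lambda>j. c ! j - (\<Sum>i<s. c ! (r + i) * B i j)) [0..<r] \<in> C0}"

(* rank weight enumerator as a homogeneous polynomial: (degree, coefficients as functions of m) *)
type_synonym hpoly = "nat \<times> (nat \<Rightarrow> int \<Rightarrow> real)"

definition hcoeff :: "hpoly \<Rightarrow> nat \<Rightarrow> int \<Rightarrow> real" where
  "hcoeff P i m = (if i \<le> fst P then snd P i m else 0)"

definition rank_enum :: "'f::field set \<Rightarrow> nat \<Rightarrow> 'f list set \<Rightarrow> hpoly" where
  "rank_enum K N C = (N, \<lambda>i m. real (card {c\<in>C. rk K c = i}))"

definition qprod :: "nat \<Rightarrow> hpoly \<Rightarrow> hpoly \<Rightarrow> hpoly" where
  "qprod q a b = (fst a + fst b, \<lambda>u m.
      (\<Sum>i=0..u. real q ^ (i * fst b) * hcoeff a i m * hcoeff b (u - i) (m - int i)))"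

fun qpow :: "nat \<Rightarrow> hpoly \<Rightarrow> nat \<Rightarrow> hpoly" where
  "qpow q a 0 = (0, \<lambda>i m. if i = 0 then 1 else 0)"
| "qpow q a (Suc l) = qprod q (qpow q a l) a"

(* x + (q^m - 1) y *)
definition lin_poly :: "nat \<Rightarrow> hpoly" where
  "lin_poly q = (1, \<lambda>i m. if i = 0 then 1 else if i = 1 then real q powi m - 1 else 0)"

end

theory Submission
  imports Defs "HOL-Library.FuncSet"
begin

(* Subtracting from the first r coordinates the K-combination of the last s coordinates
   prescribed by B is an invertible shear that does not change the K-span of the coordinates,
   so C_s has the rank distribution of the extension with B = 0, whose words are the codewords
   of C_0 followed by s arbitrary symbols.  Appending a symbol t to a word x of rank i keeps the
   rank if t lies in the K-span of the coordinates of x (q^i choices, this span having q^i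
   elements) and raises it to i + 1 otherwise (q^m - q^i choices).  This recurrence is
   q-multiplication by x + (q^m - 1) y, and q-multiplication is associative. *)

section \<open>The q-product\<close>

lemma fst_qprod [simp]: "fst (qprod q a b) = fst a + fst b"
  by (simp add: qprod_def)

lemma hcoeff_qprod:
  "hcoeff (qprod q a b) u m =
     (\<Sum>i=0..u. real q ^ (i * fst b) * hcoeff a i m * hcoeff b (u - i) (m - int i))"
proof (cases "u \<le> fst a + fst b")
  case True
  then show ?thesis by (simp add: hcoeff_def qprod_def)
next
  case False
  then have "(\<Sum>i=0..u. real q ^ (i * fst b) * hcoeff a i m * hcoeff b (u - i) (m - int i)) = 0"
    by (intro sum.neutral) (auto simp: hcoeff_def)
  then show ?thesis using False by (simp add: hcoeff_def qprod_def)
qed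

lemma hcoeff_qprod_assoc:
  "hcoeff (qprod q (qprod q a b) c) u m = hcoeff (qprod q a (qprod q b c)) u m"
proof -
  define G where "G i j = real q ^ (i * (fst b + fst c)) * hcoeff a i m *
    (real q ^ (j * fst c) * hcoeff b j (m - int i) * hcoeff c (u - i - j) (m - int i - int j))"
    for i j
  have "hcoeff (qprod q (qprod q a b) c) u m = (\<Sum>k\<le>u. \<Sum>i\<le>k. real q ^ (k * fst c) *
      (real q ^ (i * fst b) * hcoeff a i m * hcoeff b (k - i) (m - int i)) * hcoeff c (u - k) (m - int k))"
    by (simp add: hcoeff_qprod atLeast0AtMost sum_distrib_left sum_distrib_right)
  also have "\<dots> = (\<Sum>k\<le>u. \<Sum>i\<le>k. G i (k - i))"
  proof (intro sum.cong refl)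
    fix k i assume "k \<in> {..u}" "i \<in> {..k}"
    then obtain j where "k = i + j" by (metis atMost_iff le_add_diff_inverse)
    then show "real q ^ (k * fst c) * (real q ^ (i * fst b) * hcoeff a i m
        * hcoeff b (k - i) (m - int i)) * hcoeff c (u - k) (m - int k) = G i (k - i)"
      by (simp add: G_def power_add add_mult_distrib distrib_left algebra_simps)
  qed
  also have "\<dots> = (\<Sum>(i, j)\<in>{(i, j). i + j \<le> u}. G i j)"
    by (rule sum.triangle_reindex_eq [symmetric])
  also have "\<dots> = (\<Sum>i\<le>u. \<Sum>j\<le>u - i. G i j)"
    unfolding pairs_le_eq_Sigma by (rule sum.Sigma [symmetric]) auto
  also have "\<dots> = hcoeff (qprod q a (qprod q b c)) u m"
    by (simp add: G_def hcoeff_qprod atLeast0AtMost sum_distrib_left mult.assoc)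
  finally show ?thesis .
qed

lemma hcoeff_qprod_qpow_0: "hcoeff (qprod q a (qpow q b 0)) u m = hcoeff a u m"
proof -
  have "hcoeff (qprod q a (qpow q b 0)) u m = (\<Sum>i=0..u. if i = u then hcoeff a i m else 0)"
    unfolding hcoeff_qprod by (rule sum.cong) (auto simp: hcoeff_def)
  then show ?thesis by simp
qed

lemma fst_lin_poly [simp]: "fst (lin_poly q) = 1"
  by (simp add: lin_poly_def)

lemma hcoeff_lin_poly:
  "hcoeff (lin_poly q) j m = (if j = 0 then 1 else if j = 1 then real q powi m - 1 else 0)"
  by (simp add: hcoeff_def lin_poly_def)

lemma hcoeff_qprod_lin_poly:
  assumes "q \<noteq> 0"
  shows "hcoeff (qprod q a (lin_poly q)) u (int m) = real q ^ u * hcoeff a u (int m)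
     + (if u = 0 then 0 else (real q ^ m - real q ^ (u - 1)) * hcoeff a (u - 1) (int m))"
proof (cases u)
  case 0
  then show ?thesis by (simp add: hcoeff_qprod hcoeff_lin_poly)
next
  case (Suc v)
  have "(\<Sum>i=0..<v. real q ^ i * hcoeff a i (int m) * hcoeff (lin_poly q) (Suc v - i) (int m - int i)) = 0"
    by (intro sum.neutral) (auto simp: hcoeff_lin_poly)
  moreover have "real q ^ v * real q powi (int m - int v) = real q ^ m"
    using assms by (simp add: power_int_diff)
  ultimately show ?thesis
    unfolding hcoeff_qprod Suc fst_lin_poly mult_1_right
    by (simp add: sum.atLeast0_atMost_Suc atLeastLessThanSuc_atLeastAtMost [symmetric]
        hcoeff_lin_poly algebra_simps)
qed

section \<open>K-spans and the rank of a word\<close>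

lemma subfield_zero: "subfield K \<Longrightarrow> 0 \<in> K"
  and subfield_one: "subfield K \<Longrightarrow> 1 \<in> K"
  and subfield_add: "subfield K \<Longrightarrow> a \<in> K \<Longrightarrow> b \<in> K \<Longrightarrow> a + b \<in> K"
  and subfield_mult: "subfield K \<Longrightarrow> a \<in> K \<Longrightarrow> b \<in> K \<Longrightarrow> a * b \<in> K"
  and subfield_uminus: "subfield K \<Longrightarrow> a \<in> K \<Longrightarrow> - a \<in> K"
  and subfield_inverse: "subfield K \<Longrightarrow> a \<in> K \<Longrightarrow> inverse a \<in> K"
  by (simp_all add: subfield_def)

lemma subfield_diff: "subfield K \<Longrightarrow> a \<in> K \<Longrightarrow> b \<in> K \<Longrightarrow> a - b \<in> K"
  by (metis diff_conv_add_uminus subfield_add subfield_uminus)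

lemma card_subfield_ge_2:
  fixes K :: "'f::field set"
  assumes "subfield K" and "finite K"
  shows "2 \<le> card K"
proof -
  have "card {0, 1::'f} \<le> card K"
    using assms card_mono [of K "{0, 1}"] by (simp add: subfield_zero subfield_one)
  then show ?thesis by simp
qed

definition K_span :: "'f::field set \<Rightarrow> 'f set \<Rightarrow> 'f set" where
  "K_span K S = {y. \<exists>g. (\<forall>v\<in>S. g v \<in> K) \<and> y = (\<Sum>v\<in>S. g v * v)}"

lemma K_span_zero: "subfield K \<Longrightarrow> 0 \<in> K_span K S"
  unfolding K_span_def by (auto intro!: exI [of _ "\<lambda>_. 0"] simp: subfield_zero)

lemma K_span_add:
  assumes "subfield K" and "x \<in> K_span K S" and "y \<in> K_span K S"
  shows "x + y \<in> K_span K S"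
proof -
  obtain g h where "\<forall>v\<in>S. g v \<in> K" "x = (\<Sum>v\<in>S. g v * v)"
    and "\<forall>v\<in>S. h v \<in> K" "y = (\<Sum>v\<in>S. h v * v)"
    using assms(2,3) unfolding K_span_def by blast
  then show ?thesis
    unfolding K_span_def using assms(1)
    by (auto intro!: exI [of _ "\<lambda>v. g v + h v"] simp: subfield_add sum.distrib distrib_right)
qed

lemma K_span_mult:
  assumes "subfield K" and "k \<in> K" and "x \<in> K_span K S"
  shows "k * x \<in> K_span K S"
proof -
  obtain g where "\<forall>v\<in>S. g v \<in> K" "x = (\<Sum>v\<in>S. g v * v)"
    using assms(3) unfolding K_span_def by blast
  then show ?thesis
    unfolding K_span_def using assms(1,2)
    by (auto intro!: exI [of _ "\<lambda>v. k * g v"] simp: subfield_mult sum_distrib_left mult.assoc)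
qed

lemma K_span_sum:
  assumes "subfield K" and "\<And>i. i \<in> I \<Longrightarrow> f i \<in> K_span K S"
  shows "sum f I \<in> K_span K S"
  using assms(2)
  by (induction I rule: infinite_finite_induct) (simp_all add: K_span_zero K_span_add assms(1))

lemma K_span_superset:
  assumes "subfield K" and "finite S"
  shows "S \<subseteq> K_span K S"
proof
  fix v assume "v \<in> S"
  then have "(\<Sum>w\<in>S. (if w = v then 1 else 0) * w) = v"
    using assms(2) by (simp add: if_distrib [of "\<lambda>c. c * _"] cong: if_cong)
  then show "v \<in> K_span K S"
    unfolding K_span_def using assms(1)
    by (auto intro!: exI [of _ "\<lambda>w. if w = v then 1 else 0"] simp: subfield_zero subfield_one)
qed

lemma K_span_subset_K_span:
  assumes "subfield K" and "S \<subseteq> K_span K T"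
  shows "K_span K S \<subseteq> K_span K T"
proof
  fix y assume "y \<in> K_span K S"
  then obtain g where g: "\<forall>v\<in>S. g v \<in> K" "y = (\<Sum>v\<in>S. g v * v)"
    unfolding K_span_def by blast
  show "y \<in> K_span K T"
    unfolding g(2) using assms g(1) by (intro K_span_sum K_span_mult) auto
qed

lemma K_span_mono:
  assumes "subfield K" and "finite T" and "S \<subseteq> T"
  shows "K_span K S \<subseteq> K_span K T"
  using assms K_span_superset K_span_subset_K_span by (metis subset_trans)

lemma K_span_eqI:
  assumes "subfield K" and "S \<subseteq> K_span K T" and "T \<subseteq> K_span K S"
  shows "K_span K S = K_span K T"
  using assms K_span_subset_K_span by blast

lemma K_indep_finite: "K_indep K S \<Longrightarrow> finite S"
  by (simp add: K_indep_def)

lemma K_indepD: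
  "K_indep K S \<Longrightarrow> \<forall>v\<in>S. g v \<in> K \<Longrightarrow> (\<Sum>v\<in>S. g v * v) = 0 \<Longrightarrow> v \<in> S \<Longrightarrow> g v = 0"
  unfolding K_indep_def by blast

lemma K_indep_subset:
  assumes "subfield K" and "K_indep K S" and "T \<subseteq> S"
  shows "K_indep K T"
  unfolding K_indep_def
proof (intro conjI allI impI ballI)
  show "finite T" using assms(2,3) K_indep_finite finite_subset by blast
  fix g v assume g: "(\<forall>v\<in>T. g v \<in> K) \<and> (\<Sum>v\<in>T. g v * v) = 0" and "v \<in> T"
  define h where "h v = (if v \<in> T then g v else 0)" for v
  have "(\<Sum>v\<in>S. h v * v) = (\<Sum>v\<in>T. g v * v)"
    unfolding h_def using assms(2,3) K_indep_finite
    by (intro sum.mono_neutral_cong_right) auto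
  then have "h v = 0"
    using K_indepD [OF assms(2), of h v] g \<open>v \<in> T\<close> assms(1,3)
    by (auto simp: h_def subfield_zero)
  then show "g v = 0" using \<open>v \<in> T\<close> by (simp add: h_def)
qed

lemma K_indep_insert:
  assumes "subfield K" and "K_indep K S" and "v \<notin> K_span K S"
  shows "K_indep K (insert v S)"
  unfolding K_indep_def
proof (intro conjI allI impI ballI)
  have fin: "finite S" using assms(2) by (rule K_indep_finite)
  then show "finite (insert v S)" by simp
  have "v \<notin> S" using assms(1,3) K_span_superset fin by blast
  fix g w assume g: "(\<forall>w\<in>insert v S. g w \<in> K) \<and> (\<Sum>w\<in>insert v S. g w * w) = 0"
    and "w \<in> insert v S"
  then have sum_S: "(\<Sum>w\<in>S. g w * w) = - (g v * v)"
    using fin \<open>v \<notin> S\<close> by (simp add: eq_neg_iff_add_eq_0 add.commute)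
  have "g v = 0"
  proof (rule ccontr)
    assume "g v \<noteq> 0"
    have "(\<Sum>w\<in>S. (- inverse (g v) * g w) * w) = - inverse (g v) * (\<Sum>w\<in>S. g w * w)"
      by (simp add: sum_distrib_left mult.assoc)
    also have "\<dots> = v"
      using \<open>g v \<noteq> 0\<close> by (simp add: sum_S)
    finally have combination: "v = (\<Sum>w\<in>S. (- inverse (g v) * g w) * w)" ..
    have "- inverse (g v) \<in> K"
      using g assms(1) by (simp add: subfield_uminus subfield_inverse)
    then have coeffs: "\<forall>w\<in>S. - inverse (g v) * g w \<in> K"
      using g subfield_mult [OF assms(1)] by blast
    have "v \<in> K_span K S"
      unfolding K_span_def mem_Collect_eq
      by (rule exI [of _ "\<lambda>w. - inverse (g v) * g w"]) (use coeffs combination in blast)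
    then show False using assms(3) by blast
  qed
  moreover have "\<forall>w\<in>S. g w = 0"
    using K_indepD [OF assms(2), of g] g sum_S \<open>g v = 0\<close> by simp
  ultimately show "g w = 0" using \<open>w \<in> insert v S\<close> by blast
qed

lemma card_K_span:
  assumes "subfield K" and "K_indep K S"
  shows "card (K_span K S) = card K ^ card S"
proof -
  define F where "F g = (\<Sum>v\<in>S. g v * v)" for g
  have "K_span K S = F ` (S \<rightarrow>\<^sub>E K)"
  proof
    show "K_span K S \<subseteq> F ` (S \<rightarrow>\<^sub>E K)"
    proof
      fix y assume "y \<in> K_span K S"
      then obtain g where g: "\<forall>v\<in>S. g v \<in> K" "y = F g"
        unfolding K_span_def F_def by blast
      have "F g = F (restrict g S)"
        unfolding F_def by (rule sum.cong) simp_all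
      then show "y \<in> F ` (S \<rightarrow>\<^sub>E K)"
        using g by (intro image_eqI [of _ F "restrict g S"]) auto
    qed
  next
    show "F ` (S \<rightarrow>\<^sub>E K) \<subseteq> K_span K S"
    proof (rule image_subsetI)
      fix g assume "g \<in> S \<rightarrow>\<^sub>E K"
      then show "F g \<in> K_span K S"
        unfolding K_span_def F_def by (auto intro!: exI [of _ g])
    qed
  qed
  moreover have "inj_on F (S \<rightarrow>\<^sub>E K)"
  proof (rule inj_onI)
    fix g h assume g: "g \<in> S \<rightarrow>\<^sub>E K" and h: "h \<in> S \<rightarrow>\<^sub>E K" and "F g = F h"
    then have "(\<Sum>v\<in>S. (g v - h v) * v) = 0"
      unfolding F_def by (simp add: left_diff_distrib sum_subtractf)
    moreover have "\<forall>v\<in>S. g v - h v \<in> K"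
      using g h subfield_diff [OF assms(1)] by blast
    ultimately have "g v - h v = 0" if "v \<in> S" for v
      using K_indepD [OF assms(2), of "\<lambda>v. g v - h v"] that by blast
    then show "g = h"
      by (intro PiE_ext [OF g h]) simp
  qed
  ultimately have "card (K_span K S) = card (S \<rightarrow>\<^sub>E K)"
    by (simp add: card_image)
  also have "\<dots> = card K ^ card S"
    using assms(2) by (simp add: card_PiE K_indep_finite)
  finally show ?thesis .
qed

lemma finite_rk_candidates: "finite {card S | S. S \<subseteq> set x \<and> K_indep K S}"
  by (rule finite_subset [of _ "{..card (set x)}"]) (auto simp: card_mono)

lemma card_le_rk:
  assumes "S \<subseteq> set x" and "K_indep K S"
  shows "card S \<le> rk K x"
  unfolding rk_def by (intro Max_ge [OF finite_rk_candidates]) (use assms in blast)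

lemma rk_witness:
  obtains S where "S \<subseteq> set x" "K_indep K S" "card S = rk K x"
proof -
  have "{} \<subseteq> set x \<and> K_indep K {}" by (simp add: K_indep_def)
  then have "{card S | S. S \<subseteq> set x \<and> K_indep K S} \<noteq> {}" by blast
  with finite_rk_candidates have "rk K x \<in> {card S | S. S \<subseteq> set x \<and> K_indep K S}"
    unfolding rk_def by (rule Max_in)
  then obtain S where "S \<subseteq> set x" "K_indep K S" "card S = rk K x" by auto
  then show ?thesis using that by blast
qed

lemma rk_le_length: "rk K x \<le> length x"
proof -
  obtain S where "S \<subseteq> set x" "card S = rk K x" by (rule rk_witness)
  then have "rk K x \<le> card (set x)" using card_mono [of "set x" S] by simp
  then show ?thesis using card_length [of x] by linarith
qed

lemma K_span_rk_witness:
  assumes "subfield K" and "S \<subseteq> set x" and "K_indep K S" and "card S = rk K x"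
  shows "K_span K (set x) = K_span K S"
proof -
  have "set x \<subseteq> K_span K S"
  proof
    fix v assume "v \<in> set x"
    show "v \<in> K_span K S"
    proof (rule ccontr)
      assume "v \<notin> K_span K S"
      then have "K_indep K (insert v S)" and "v \<notin> S"
        using K_indep_insert K_span_superset K_indep_finite assms(1,3) by blast+
      moreover have "insert v S \<subseteq> set x" using \<open>v \<in> set x\<close> assms(2) by simp
      ultimately have "card (insert v S) \<le> rk K x" by (intro card_le_rk)
      then show False using \<open>v \<notin> S\<close> K_indep_finite [OF assms(3)] assms(4) by simp
    qed
  qed
  then have "K_span K (set x) \<subseteq> K_span K S"
    by (rule K_span_subset_K_span [OF assms(1)])
  moreover have "K_span K S \<subseteq> K_span K (set x)"
    by (rule K_span_mono [OF assms(1) finite_set assms(2)])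
  ultimately show ?thesis by blast
qed

lemma card_K_span_set:
  assumes "subfield K"
  shows "card (K_span K (set x)) = card K ^ rk K x"
proof -
  obtain S where "S \<subseteq> set x" "K_indep K S" "card S = rk K x" by (rule rk_witness)
  then show ?thesis using K_span_rk_witness card_K_span assms by metis
qed

lemma rk_eq_if_K_span_eq:
  fixes K :: "'f::field set"
  assumes "subfield K" and "finite K" and "K_span K (set x) = K_span K (set y)"
  shows "rk K x = rk K y"
proof -
  have "card K ^ rk K x = card K ^ rk K y"
    using card_K_span_set [OF assms(1)] assms(3) by metis
  then show ?thesis
    using card_subfield_ge_2 [OF assms(1,2)] by (simp add: power_inject_exp)
qed

lemma rk_snoc_in_K_span:
  assumes "subfield K" and "finite K" and "t \<in> K_span K (set x)"
  shows "rk K (x @ [t]) = rk K x"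
  using assms K_span_superset [OF assms(1), of "set x"] K_span_superset [OF assms(1), of "set (x @ [t])"]
  by (intro rk_eq_if_K_span_eq K_span_eqI) auto

lemma rk_snoc_notin_K_span:
  assumes "subfield K" and "t \<notin> K_span K (set x)"
  shows "rk K (x @ [t]) = Suc (rk K x)"
proof (rule antisym)
  obtain S where S: "S \<subseteq> set x" "K_indep K S" "card S = rk K x" by (rule rk_witness)
  have "t \<notin> K_span K S"
    using assms K_span_mono [OF assms(1) _ S(1)] by auto
  then have "K_indep K (insert t S)"
    using K_indep_insert [OF assms(1) S(2)] by blast
  moreover have "t \<notin> S"
    using assms S(1) K_span_superset [OF assms(1), of "set x"] by auto
  moreover have "insert t S \<subseteq> set (x @ [t])" using S(1) by auto
  ultimately have "card (insert t S) \<le> rk K (x @ [t])" by (intro card_le_rk)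
  then show "Suc (rk K x) \<le> rk K (x @ [t])"
    using \<open>t \<notin> S\<close> K_indep_finite [OF S(2)] S(3) by simp
next
  obtain S where S: "S \<subseteq> set (x @ [t])" "K_indep K S" "card S = rk K (x @ [t])"
    by (rule rk_witness)
  have "card (S - {t}) \<le> rk K x"
    using S(1) K_indep_subset [OF assms(1) S(2)] by (intro card_le_rk) auto
  moreover have "card S \<le> Suc (card (S - {t}))"
    using K_indep_finite [OF S(2)] by (cases "t \<in> S") (simp_all add: card_Suc_Diff1)
  ultimately show "rk K (x @ [t]) \<le> Suc (rk K x)" using S(3) by linarith
qed

lemma card_snoc_rk:
  fixes K :: "'f::{field,finite} set"
  assumes "subfield K" and "card (UNIV :: 'f set) = card K ^ m"
  shows "real (card {t. rk K (x @ [t]) = u}) =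
     (if u = rk K x then real (card K) ^ u
      else if u = Suc (rk K x) then real (card K) ^ m - real (card K) ^ rk K x else 0)"
proof -
  let ?V = "K_span K (set x)"
  have rk_snoc: "rk K (x @ [t]) = (if t \<in> ?V then rk K x else Suc (rk K x))" for t
    by (simp add: rk_snoc_in_K_span rk_snoc_notin_K_span assms(1))
  have card_V: "card ?V = card K ^ rk K x"
    using assms(1) by (rule card_K_span_set)
  then have "card K ^ rk K x \<le> card K ^ m"
    using assms(2) card_mono [of UNIV ?V] by simp
  then have "real (card (- ?V)) = real (card K) ^ m - real (card K) ^ rk K x"
    using assms(2) card_V by (simp add: Compl_eq_Diff_UNIV card_Diff_subset of_nat_diff)
  moreover have "{t. rk K (x @ [t]) = u} =
      (if u = rk K x then ?V else if u = Suc (rk K x) then - ?V else {})"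
    unfolding rk_snoc by auto
  ultimately show ?thesis using card_V by simp
qed

section \<open>Shears and elementary extensions\<close>

definition shear :: "nat \<Rightarrow> nat \<Rightarrow> (nat \<Rightarrow> nat \<Rightarrow> 'f::field) \<Rightarrow> 'f list \<Rightarrow> 'f list" where
  "shear r s B c = map (\<lambda>j. c ! j + (\<Sum>i<s. c ! (r + i) * B i j)) [0..<r] @ drop r c"

lemma length_shear: "r \<le> length c \<Longrightarrow> length (shear r s B c) = length c"
  by (simp add: shear_def)

lemma nth_shear:
  "r \<le> length c \<Longrightarrow> n < length c \<Longrightarrow>
     shear r s B c ! n = (if n < r then c ! n + (\<Sum>i<s. c ! (r + i) * B i n) else c ! n)"
  by (simp add: shear_def nth_append)

lemma shear_zero: "r \<le> length c \<Longrightarrow> shear r s (\<lambda>_ _. 0) c = c"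
  by (rule nth_equalityI) (simp_all add: length_shear nth_shear)

lemma shear_uminus_shear:
  assumes "r + s \<le> length c"
  shows "shear r s (\<lambda>i j. - B i j) (shear r s B c) = c"
proof (rule nth_equalityI)
  show "length (shear r s (\<lambda>i j. - B i j) (shear r s B c)) = length c"
    using assms by (simp add: length_shear)
next
  fix n assume "n < length (shear r s (\<lambda>i j. - B i j) (shear r s B c))"
  moreover have "shear r s B c ! (r + i) = c ! (r + i)" if "i < s" for i
    using assms that by (simp add: nth_shear)
  ultimately show "shear r s (\<lambda>i j. - B i j) (shear r s B c) ! n = c ! n"
    using assms by (simp add: length_shear nth_shear sum_negf)
qed

lemma set_shear_subset_K_span:
  assumes "subfield K" and "K_matrix K s r B" and "r + s \<le> length c"
  shows "set (shear r s B c) \<subseteq> K_span K (set c)"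
proof
  have coord: "c ! n \<in> K_span K (set c)" if "n < length c" for n
    using that K_span_superset [OF assms(1)] by (meson finite_set nth_mem subsetD)
  fix y assume "y \<in> set (shear r s B c)"
  then obtain n where n: "n < length c" "y = shear r s B c ! n"
    using assms(3) by (auto simp: in_set_conv_nth length_shear)
  have "(\<Sum>i<s. c ! (r + i) * B i n) \<in> K_span K (set c)" if "n < r"
    using assms that coord
    by (intro K_span_sum) (auto simp: K_matrix_def mult.commute [of "c ! _"] intro!: K_span_mult)
  then show "y \<in> K_span K (set c)"
    using n coord assms(1,3) by (simp add: nth_shear K_span_add)
qed

lemma rk_shear:
  fixes K :: "'f::{field,finite} set"
  assumes "subfield K" and "K_matrix K s r B" and "r + s \<le> length c"
  shows "rk K (shear r s B c) = rk K c"
proof (rule rk_eq_if_K_span_eq [OF assms(1) finite], rule K_span_eqI [OF assms(1)])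
  show "set (shear r s B c) \<subseteq> K_span K (set c)"
    using assms by (rule set_shear_subset_K_span)
  have "K_matrix K s r (\<lambda>i j. - B i j)"
    using assms(1,2) by (simp add: K_matrix_def subfield_uminus)
  then have "set (shear r s (\<lambda>i j. - B i j) (shear r s B c)) \<subseteq> K_span K (set (shear r s B c))"
    using assms(1,3) by (intro set_shear_subset_K_span) (simp_all add: length_shear)
  then show "set c \<subseteq> K_span K (set (shear r s B c))"
    using assms(3) by (simp add: shear_uminus_shear)
qed

lemma elem_ext_eq_shear:
  "elem_ext C0 r s B = {c. length c = r + s \<and> take r (shear r s (\<lambda>i j. - B i j) c) \<in> C0}"
  by (simp add: elem_ext_def shear_def sum_negf)

lemma elem_ext_zero: "elem_ext C0 r s (\<lambda>_ _. 0) = {c. length c = r + s \<and> take r c \<in> C0}"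
  by (auto simp: elem_ext_eq_shear shear_zero)

lemma elem_ext_eq_image_shear:
  "elem_ext C0 r s B = shear r s B ` elem_ext C0 r s (\<lambda>_ _. 0)"
proof
  show "elem_ext C0 r s B \<subseteq> shear r s B ` elem_ext C0 r s (\<lambda>_ _. 0)"
  proof
    fix c assume c: "c \<in> elem_ext C0 r s B"
    then have "c = shear r s B (shear r s (\<lambda>i j. - B i j) c)"
      using shear_uminus_shear [of r s c "\<lambda>i j. - B i j"] by (simp add: elem_ext_def)
    moreover have "shear r s (\<lambda>i j. - B i j) c \<in> elem_ext C0 r s (\<lambda>_ _. 0)"
      using c unfolding elem_ext_zero by (simp add: elem_ext_eq_shear length_shear)
    ultimately show "c \<in> shear r s B ` elem_ext C0 r s (\<lambda>_ _. 0)" by blast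
  qed
  show "shear r s B ` elem_ext C0 r s (\<lambda>_ _. 0) \<subseteq> elem_ext C0 r s B"
    unfolding elem_ext_zero by (auto simp: elem_ext_eq_shear length_shear shear_uminus_shear)
qed

lemma card_rk_elem_ext_eq_zero:
  fixes K :: "'f::{field,finite} set"
  assumes "subfield K" and "K_matrix K s r B"
  shows "card {c \<in> elem_ext C0 r s B. rk K c = u} = card {c \<in> elem_ext C0 r s (\<lambda>_ _. 0). rk K c = u}"
proof -
  let ?E0 = "{c \<in> elem_ext C0 r s (\<lambda>_ _. 0). rk K c = u}"
  have "{c \<in> elem_ext C0 r s B. rk K c = u} = shear r s B ` ?E0"
    unfolding elem_ext_eq_image_shear [of C0 r s B]
    using rk_shear [OF assms] by (auto simp: elem_ext_zero)
  moreover have "inj_on (shear r s B) ?E0"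
    by (rule inj_on_inverseI [of _ "shear r s (\<lambda>i j. - B i j)"])
      (simp add: elem_ext_zero shear_uminus_shear)
  ultimately show ?thesis by (simp add: card_image)
qed

section \<open>Rank distribution of the extension with \<open>B = 0\<close>\<close>

lemma hcoeff_rank_enum:
  assumes "C \<subseteq> {c. length c = N}"
  shows "hcoeff (rank_enum K N C) u m = real (card {c \<in> C. rk K c = u})"
proof (cases "u \<le> N")
  case False
  then have no_words: "{c \<in> C. rk K c = u} = {}"
    using assms rk_le_length [of K] by fastforce
  show ?thesis using False by (simp add: hcoeff_def rank_enum_def no_words)
qed (simp add: hcoeff_def rank_enum_def)

lemma finite_elem_ext: "finite (elem_ext C0 r s (B :: nat \<Rightarrow> nat \<Rightarrow> 'f::{field,finite}))"
  by (rule finite_subset [OF _ finite_lists_length_eq [of UNIV "r + s"]]) (auto simp: elem_ext_def)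

lemma card_rk_elem_ext_zero_Suc:
  fixes K :: "'f::{field,finite} set" and C0 :: "'f list set" and r :: nat
  assumes "subfield K" and "card (UNIV :: 'f set) = card K ^ m"
  defines "N s u \<equiv> real (card {c \<in> elem_ext C0 r s (\<lambda>_ _. 0). rk K c = u})"
  shows "N (Suc s) u = real (card K) ^ u * N s u
     + (if u = 0 then 0 else (real (card K) ^ m - real (card K) ^ (u - 1)) * N s (u - 1))"
proof -
  let ?E = "elem_ext C0 r s (\<lambda>_ _. 0)"
  let ?T = "\<lambda>x. {t. rk K (x @ [t]) = u}"
  have "{c \<in> elem_ext C0 r (Suc s) (\<lambda>_ _. 0). rk K c = u} = (\<lambda>(x, t). x @ [t]) ` (SIGMA x:?E. ?T x)"
  proof (intro equalityI subsetI)
    fix c assume "c \<in> {c \<in> elem_ext C0 r (Suc s) (\<lambda>_ _. 0). rk K c = u}"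
    then have "length c = Suc (r + s)" "take r c \<in> C0" "rk K c = u"
      by (simp_all add: elem_ext_zero)
    moreover have "c = butlast c @ [last c]"
      using \<open>length c = Suc (r + s)\<close> by (metis append_butlast_last_id list.size(3) nat.distinct(1))
    ultimately have "butlast c \<in> ?E" "c = butlast c @ [last c]" "rk K c = u"
      by (simp_all add: elem_ext_zero take_butlast)
    then show "c \<in> (\<lambda>(x, t). x @ [t]) ` (SIGMA x:?E. ?T x)"
      by (intro image_eqI [of _ _ "(butlast c, last c)"]) auto
  qed (auto simp: elem_ext_zero)
  moreover have "inj_on (\<lambda>(x, t). x @ [t]) (SIGMA x:?E. ?T x)"
    by (auto simp: inj_on_def)
  ultimately have "N (Suc s) u = (\<Sum>x\<in>?E. real (card (?T x)))"
    unfolding N_def by (simp add: card_image card_SigmaI finite_elem_ext)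
  also have "\<dots> = (\<Sum>x\<in>?E. (if rk K x = u then real (card K) ^ u else 0)
      + (if u \<noteq> 0 \<and> rk K x = u - 1 then real (card K) ^ m - real (card K) ^ (u - 1) else 0))"
    by (intro sum.cong refl) (auto simp: card_snoc_rk [OF assms(1,2)])
  also have "\<dots> = real (card K) ^ u * N s u
      + (if u = 0 then 0 else (real (card K) ^ m - real (card K) ^ (u - 1)) * N s (u - 1))"
    unfolding N_def by (simp add: sum.distrib sum.If_cases finite_elem_ext Int_def)
  finally show ?thesis .
qed

lemma card_rk_elem_ext_zero:
  fixes K :: "'f::{field,finite} set"
  assumes "subfield K" and "card K = q" and "card (UNIV :: 'f set) = q ^ m"
    and "C0 \<subseteq> {c. length c = r}"
  shows "real (card {c \<in> elem_ext C0 r s (\<lambda>_ _. 0). rk K c = u})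
       = hcoeff (qprod q (rank_enum K r C0) (qpow q (lin_poly q) s)) u (int m)"
proof (induction s arbitrary: u)
  case 0
  have "elem_ext C0 r 0 (\<lambda>_ _. 0) = C0"
    using assms(4) by (auto simp: elem_ext_zero)
  then show ?case
    unfolding hcoeff_qprod_qpow_0 by (simp add: hcoeff_rank_enum [OF assms(4)])
next
  case (Suc s)
  let ?P = "qprod q (rank_enum K r C0) (qpow q (lin_poly q) s)"
  have "q \<noteq> 0"
    using card_subfield_ge_2 [OF assms(1) finite] assms(2) by simp
  have "hcoeff (qprod q (rank_enum K r C0) (qpow q (lin_poly q) (Suc s))) u (int m)
      = hcoeff (qprod q ?P (lin_poly q)) u (int m)"
    by (simp add: hcoeff_qprod_assoc)
  also have "\<dots> = real q ^ u * hcoeff ?P u (int m)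
      + (if u = 0 then 0 else (real q ^ m - real q ^ (u - 1)) * hcoeff ?P (u - 1) (int m))"
    by (rule hcoeff_qprod_lin_poly [OF \<open>q \<noteq> 0\<close>])
  also have "\<dots> = real (card {c \<in> elem_ext C0 r (Suc s) (\<lambda>_ _. 0). rk K c = u})"
    using card_rk_elem_ext_zero_Suc [OF assms(1), of m C0 r s u] assms(2,3)
    by (simp add: Suc.IH)
  finally show ?case ..
qed

theorem lemma8:
  fixes K :: "'f::{field,finite} set" and q m r s :: nat and C0 :: "'f list set"
    and B :: "nat \<Rightarrow> nat \<Rightarrow> 'f"
  assumes "subfield K" and "card K = q" and "card (UNIV :: 'f set) = q ^ m"
    and "linear_code r C0" and "K_matrix K s r B"
  shows "(\<forall>B'. K_matrix K s r B' \<longrightarrow>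
            (\<forall>u. card {c\<in>elem_ext C0 r s B'. rk K c = u} = card {c\<in>elem_ext C0 r s B. rk K c = u}))
       \<and> (\<forall>u\<le>r+s. hcoeff (rank_enum K (r+s) (elem_ext C0 r s B)) u (int m)
              = hcoeff (qprod q (rank_enum K r C0) (qpow q (lin_poly q) s)) u (int m))"
proof (intro conjI allI impI)
  fix B' u assume "K_matrix K s r B'"
  then have "card {c\<in>elem_ext C0 r s B'. rk K c = u}
      = card {c \<in> elem_ext C0 r s (\<lambda>_ _. 0). rk K c = u}"
    by (rule card_rk_elem_ext_eq_zero [OF assms(1)])
  also have "\<dots> = card {c\<in>elem_ext C0 r s B. rk K c = u}"
    by (rule card_rk_elem_ext_eq_zero [OF assms(1,5), symmetric])
  finally show "card {c\<in>elem_ext C0 r s B'. rk K c = u} = card {c\<in>elem_ext C0 r s B. rk K c = u}" .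
next
  fix u
  have "hcoeff (rank_enum K (r+s) (elem_ext C0 r s B)) u (int m)
      = real (card {c \<in> elem_ext C0 r s B. rk K c = u})"
    by (rule hcoeff_rank_enum) (auto simp: elem_ext_def)
  also have "\<dots> = real (card {c \<in> elem_ext C0 r s (\<lambda>_ _. 0). rk K c = u})"
    by (simp only: card_rk_elem_ext_eq_zero [OF assms(1,5)])
  also have "\<dots> = hcoeff (qprod q (rank_enum K r C0) (qpow q (lin_poly q) s)) u (int m)"
    \<comment> \<open>of the linearity of \<open>C0\<close> only the word length is needed\<close>
    using assms(4) unfolding linear_code_def
    by (intro card_rk_elem_ext_zero [OF assms(1-3)]) simp
  finally show "hcoeff (rank_enum K (r+s) (elem_ext C0 r s B)) u (int m)
      = hcoeff (qprod q (rank_enum K r C0) (qpow q (lin_poly q) s)) u (int m)" .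
qed

end
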